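(* Let $N$ be a non-negative integer and let $h_1,h_2,l_1,l_2,\alpha_1,\alpha_2,\beta,E$ satisfy $\beta=N+1$. Then the singularity $x=0$ of the $q$-Heun equation $A^{\langle4\rangle}(x;h_1,h_2,l_1,l_2,\alpha_1,\alpha_2,\beta)g(x)=Eg(x)$ is apparent (in the sense of the context) if and only if $c(E)=0$, where $c(E)$ is the polynomial defined in the context.
   Context: $q\in\mathbb{C}$ with $0<|q|<1$; powers via a fixed branch of $\log q$; $t_1,t_2$ fixed non-zero constants. $A^{\langle 4\rangle}(x;h_1,h_2,l_1,l_2,\alpha_1,\alpha_2,\beta)=x^{-1}(x-q^{h_1+1/2}t_1)(x-q^{h_2+1/2}t_2)T_x^{-1}+q^{\alpha_1+\alpha_2}x^{-1}(x-q^{l_1-1/2}t_1)(x-q^{l_2-1/2}t_2)T_x-\{(q^{\alpha_1}+q^{\alpha_2})x+q^{(h_1+h_2+l_1+l_2+\alpha_1+\alpha_2)/2}(q^{\beta/2}+q^{-\beta/2})t_1t_2x^{-1}\}$, where $T_x^{\pm1}g(x)=g(q^{\pm1}x)$. Let $\lambda_1=(h_1+h_2-l_1-l_2-\alpha_1-\alpha_2-\beta+2)/2$. Apparency: a formal series $x^{\lambda_1}\sum_{n\ge0}d_nx^n$ solves the equation iff for all $n\ge1$ (with $d_{-1}=0$) $d_nt_1t_2q^{1-n+h_1+h_2-\lambda_1}(1-q^n)(1-q^{n-\beta})-d_{n-1}[E+q^{3/2-n-\lambda_1}(q^{h_1}t_1+q^{h_2}t_2)+q^{n-3/2+\lambda_1+\alpha_1+\alpha_2}(q^{l_1}t_1+q^{l_2}t_2)]+d_{n-2}q^{2-n-\lambda_1}(1-q^{n-2+\lambda_1+\alpha_1})(1-q^{n-2+\lambda_1+\alpha_2})=0$.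 With $\beta=N+1$, set $d_0=1$ and determine $d_1,\dots,d_N$ uniquely from these relations for $n=1,\dots,N$; the singularity $x=0$ is called apparent if the relation for $n=N+1$ (in which the coefficient of $d_{N+1}$ vanishes) then holds. The polynomial $c(E)$: set $x_n=t_1t_2q^{n-N+1+h_1+h_2-\alpha_1-2\lambda_1}(1-q^{-n})(1-q^{N-n+\lambda_1+\alpha_1})$, $y_n=q^{N-n+1/2+\lambda_1+\alpha_1+\alpha_2}(q^{l_1}t_1+q^{l_2}t_2)+q^{n-N-1/2-\lambda_1}(q^{h_1}t_1+q^{h_2}t_2)$, $z_n=q^{n-N-2+\alpha_1}(1-q^{N-n+1+\lambda_1+\alpha_2})(1-q^{N-n+2})$, and $c(E)=\sum(-1)^kx_{i_1}z_{i_1+1}\cdots x_{i_k}z_{i_k+1}\prod_{j\in\{1,\dots,N+1\}\setminus\{i_1,i_1+1,\dots,i_k,i_k+1\}}(E+y_j)$, summed over $k\ge0$ and integers $1\le i_1<\dots<i_k\le N$ with $i_{l+1}-i_l\ge2$. (When all $x_n\ne0$, this equals $x_1\cdots x_N[c_N(E)(E+y_{N+1})-c_{N-1}(E)z_{N+1}]$ where $c_{-1}=0$, $c_0=1$, $c_n(E)x_n=c_{n-1}(E)(E+y_n)-c_{n-2}(E)z_n$.) *)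

theory Defs
  imports Complex_Main
begin

text \<open>Powers of q via a fixed branch L of log q (exp L = q): q^a = exp (a * L).\<close>
definition qp :: "complex \<Rightarrow> complex \<Rightarrow> complex" where
  "qp L a = exp (a * L)"

definition lambda1 :: "complex \<Rightarrow> complex \<Rightarrow> complex \<Rightarrow> complex \<Rightarrow> complex \<Rightarrow> complex \<Rightarrow> complex \<Rightarrow> complex" where
  "lambda1 h1 h2 l1 l2 a1 a2 b = (h1 + h2 - l1 - l2 - a1 - a2 - b + 2) / 2"

definition heun_rel ::
  "complex \<Rightarrow> complex \<Rightarrow> complex \<Rightarrow> complex \<Rightarrow> complex \<Rightarrow> complex \<Rightarrow> complex \<Rightarrow> complex \<Rightarrow> complex
   \<Rightarrow> complex \<Rightarrow> complex \<Rightarrow> (nat \<Rightarrow> complex) \<Rightarrow> nat \<Rightarrow> bool" where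
  "heun_rel L t1 t2 h1 h2 l1 l2 a1 a2 b E d n \<longleftrightarrow>
     (let lam = lambda1 h1 h2 l1 l2 a1 a2 b; m = of_nat n :: complex in
      d n * t1 * t2 * qp L (1 - m + h1 + h2 - lam) * (1 - qp L m) * (1 - qp L (m - b))
      - d (n - 1) * (E + qp L (3/2 - m - lam) * (qp L h1 * t1 + qp L h2 * t2)
                     + qp L (m - 3/2 + lam + a1 + a2) * (qp L l1 * t1 + qp L l2 * t2))
      + (if n \<ge> 2 then d (n - 2) else 0) * qp L (2 - m - lam)
          * (1 - qp L (m - 2 + lam + a1)) * (1 - qp L (m - 2 + lam + a2)) = 0)"

text \<open>Apparency of x = 0 for beta = N+1: with d_0 = 1 and d_1..d_N determined by the
  relations n = 1..N, the relation n = N+1 holds as well.  Since d_1..d_N are uniquely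
  determined (and the coefficient of d_{N+1} in relation N+1 vanishes), this is expressed as
  existence of a sequence d with d 0 = 1 satisfying relations 1..N+1.\<close>
definition apparent ::
  "complex \<Rightarrow> complex \<Rightarrow> complex \<Rightarrow> complex \<Rightarrow> complex \<Rightarrow> complex \<Rightarrow> complex \<Rightarrow> complex \<Rightarrow> complex
   \<Rightarrow> complex \<Rightarrow> complex \<Rightarrow> nat \<Rightarrow> bool" where
  "apparent L t1 t2 h1 h2 l1 l2 a1 a2 b E N \<longleftrightarrow>
     (\<exists>d. d 0 = 1 \<and> (\<forall>n\<in>{1..N+1}. heun_rel L t1 t2 h1 h2 l1 l2 a1 a2 b E d n))"

definition cx :: "complex \<Rightarrow> complex \<Rightarrow> complex \<Rightarrow> complex \<Rightarrow> complex \<Rightarrow> complex \<Rightarrow> complex \<Rightarrow> complex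
   \<Rightarrow> complex \<Rightarrow> complex \<Rightarrow> nat \<Rightarrow> nat \<Rightarrow> complex" where
  "cx L t1 t2 h1 h2 l1 l2 a1 a2 b N n =
     (let lam = lambda1 h1 h2 l1 l2 a1 a2 b; m = of_nat n :: complex; NN = of_nat N :: complex in
      t1 * t2 * qp L (m - NN + 1 + h1 + h2 - a1 - 2 * lam) * (1 - qp L (- m))
        * (1 - qp L (NN - m + lam + a1)))"

definition cy :: "complex \<Rightarrow> complex \<Rightarrow> complex \<Rightarrow> complex \<Rightarrow> complex \<Rightarrow> complex \<Rightarrow> complex \<Rightarrow> complex
   \<Rightarrow> complex \<Rightarrow> complex \<Rightarrow> nat \<Rightarrow> nat \<Rightarrow> complex" where
  "cy L t1 t2 h1 h2 l1 l2 a1 a2 b N n =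
     (let lam = lambda1 h1 h2 l1 l2 a1 a2 b; m = of_nat n :: complex; NN = of_nat N :: complex in
      qp L (NN - m + 1/2 + lam + a1 + a2) * (qp L l1 * t1 + qp L l2 * t2)
      + qp L (m - NN - 1/2 - lam) * (qp L h1 * t1 + qp L h2 * t2))"

definition cz :: "complex \<Rightarrow> complex \<Rightarrow> complex \<Rightarrow> complex \<Rightarrow> complex \<Rightarrow> complex \<Rightarrow> complex
   \<Rightarrow> complex \<Rightarrow> nat \<Rightarrow> nat \<Rightarrow> complex" where
  "cz L h1 h2 l1 l2 a1 a2 b N n =
     (let lam = lambda1 h1 h2 l1 l2 a1 a2 b; m = of_nat n :: complex; NN = of_nat N :: complex in
      qp L (m - NN - 2 + a1) * (1 - qp L (NN - m + 1 + lam + a2)) * (1 - qp L (NN - m + 2)))"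

definition cpoly :: "complex \<Rightarrow> complex \<Rightarrow> complex \<Rightarrow> complex \<Rightarrow> complex \<Rightarrow> complex \<Rightarrow> complex \<Rightarrow> complex
   \<Rightarrow> complex \<Rightarrow> complex \<Rightarrow> nat \<Rightarrow> complex \<Rightarrow> complex" where
  "cpoly L t1 t2 h1 h2 l1 l2 a1 a2 b N E =
     (\<Sum>S\<in>{S. S \<subseteq> {1..N} \<and> (\<forall>i\<in>S. Suc i \<notin> S)}.
        (-1) ^ card S
        * (\<Prod>i\<in>S. cx L t1 t2 h1 h2 l1 l2 a1 a2 b N i * cz L h1 h2 l1 l2 a1 a2 b N (Suc i))
        * (\<Prod>j\<in>{1..N+1} - (S \<union> Suc ` S). E + cy L t1 t2 h1 h2 l1 l2 a1 a2 b N j))"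

end

(*
  Write the recurrence for the coefficients as  a n * d n - b n * d (n - 1) + c n * d (n - 2) = 0.
  Any solution with d 0 = 1 of the relations up to n satisfies  a 1 * ... * a n * d n = K n,
  where K is the continuant with diagonal b and off-diagonal products a i * c (i + 1).  For
  beta = N + 1 the leading coefficients a 1, ..., a N are nonzero (|q| < 1) and a (N + 1) = 0,
  so d 1, ..., d N are forced and relation N + 1 holds exactly when K (N + 1) = 0.  Euler's rule
  expands a continuant as a signed sum over sets of non-adjacent pairs (i, i + 1), and c(E) is
  this expansion of K (N + 1) read backwards, n <-> N + 2 - n.
*)
theory Submission
  imports Defs
begin

fun continuant :: "(nat \<Rightarrow> 'a::comm_ring_1) \<Rightarrow> (nat \<Rightarrow> 'a) \<Rightarrow> nat \<Rightarrow> 'a" where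
  "continuant f g 0 = 1"
| "continuant f g (Suc 0) = f 1"
| "continuant f g (Suc (Suc n)) = f (Suc (Suc n)) * continuant f g (Suc n) - g (Suc n) * continuant f g n"

lemma continuant_cong:
  "(\<And>j. j \<in> {1..n} \<Longrightarrow> f j = f' j) \<Longrightarrow> (\<And>i. i \<in> {1..<n} \<Longrightarrow> g i = g' i)
    \<Longrightarrow> continuant f g n = continuant f' g' n"
  by (induction n rule: induct_nat_012) auto

definition nonconsecutive_subsets :: "nat \<Rightarrow> nat set set" where
  "nonconsecutive_subsets m = {S. S \<subseteq> {1..m} \<and> (\<forall>i\<in>S. Suc i \<notin> S)}"

definition matching_sum :: "(nat \<Rightarrow> 'a::comm_ring_1) \<Rightarrow> (nat \<Rightarrow> 'a) \<Rightarrow> nat \<Rightarrow> 'a" where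
  "matching_sum f g m = (\<Sum>S\<in>nonconsecutive_subsets m.
     (-1) ^ card S * (\<Prod>i\<in>S. g i) * (\<Prod>j\<in>{1..Suc m} - (S \<union> Suc ` S). f j))"

lemma finite_nonconsecutive_subsets: "finite (nonconsecutive_subsets m)"
  unfolding nonconsecutive_subsets_def by (rule finite_subset[of _ "Pow {1..m}"]) auto

lemma nonconsecutive_subsets_Suc_Suc:
  "nonconsecutive_subsets (Suc (Suc m))
     = nonconsecutive_subsets (Suc m) \<union> insert (Suc (Suc m)) ` nonconsecutive_subsets m"
  (is "?lhs = ?rhs")
proof
  show "?lhs \<subseteq> ?rhs"
  proof
    fix S assume S: "S \<in> ?lhs"
    show "S \<in> ?rhs"
    proof (cases "Suc (Suc m) \<in> S")
      case True
      then have "S - {Suc (Suc m)} \<in> nonconsecutive_subsets m"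
        using S unfolding nonconsecutive_subsets_def by (auto simp: subset_iff le_Suc_eq)
      moreover have "S = insert (Suc (Suc m)) (S - {Suc (Suc m)})" using True by auto
      ultimately show ?thesis by blast
    next
      case False
      then have "S \<in> nonconsecutive_subsets (Suc m)"
        using S unfolding nonconsecutive_subsets_def by (auto simp: subset_iff le_Suc_eq)
      then show ?thesis by blast
    qed
  qed
  show "?rhs \<subseteq> ?lhs"
    unfolding nonconsecutive_subsets_def by (auto simp: subset_iff)
qed

lemma matching_sum_Suc_Suc:
  "matching_sum f g (Suc (Suc m))
     = f (Suc (Suc (Suc m))) * matching_sum f g (Suc m) - g (Suc (Suc m)) * matching_sum f g m"
proof -
  let ?term = "\<lambda>n S. (-1) ^ card S * (\<Prod>i\<in>S. g i) * (\<Prod>j\<in>{1..Suc n} - (S \<union> Suc ` S). f j)"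
  have disjoint: "nonconsecutive_subsets (Suc m) \<inter> insert (Suc (Suc m)) ` nonconsecutive_subsets m = {}"
    unfolding nonconsecutive_subsets_def by auto
  have top_notin: "Suc (Suc m) \<notin> S" if "S \<in> nonconsecutive_subsets m" for S
    using that unfolding nonconsecutive_subsets_def by auto
  have inj: "inj_on (insert (Suc (Suc m))) (nonconsecutive_subsets m)"
    by (rule inj_onI) (simp add: insert_ident top_notin)
  have without_top: "(\<Sum>S\<in>nonconsecutive_subsets (Suc m). ?term (Suc (Suc m)) S)
      = f (Suc (Suc (Suc m))) * matching_sum f g (Suc m)"
    unfolding matching_sum_def sum_distrib_left
  proof (rule sum.cong[OF refl])
    fix S assume "S \<in> nonconsecutive_subsets (Suc m)"
    then have "{1..Suc (Suc (Suc m))} - (S \<union> Suc ` S)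
        = insert (Suc (Suc (Suc m))) ({1..Suc (Suc m)} - (S \<union> Suc ` S))"
      unfolding nonconsecutive_subsets_def by auto
    then show "?term (Suc (Suc m)) S = f (Suc (Suc (Suc m))) * ?term (Suc m) S"
      by (simp add: ac_simps)
  qed
  have with_top: "(\<Sum>S\<in>insert (Suc (Suc m)) ` nonconsecutive_subsets m. ?term (Suc (Suc m)) S)
      = - g (Suc (Suc m)) * matching_sum f g m"
    unfolding matching_sum_def sum_distrib_left sum.reindex[OF inj] o_def
  proof (rule sum.cong[OF refl])
    fix S assume S: "S \<in> nonconsecutive_subsets m"
    have "finite S"
      using S unfolding nonconsecutive_subsets_def by (auto intro: finite_subset)
    moreover note top_notin[OF S]
    moreover have "{1..Suc (Suc (Suc m))} - (insert (Suc (Suc m)) S \<union> Suc ` insert (Suc (Suc m)) S)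
        = {1..Suc m} - (S \<union> Suc ` S)"
      using S unfolding nonconsecutive_subsets_def by auto
    ultimately show "?term (Suc (Suc m)) (insert (Suc (Suc m)) S) = - g (Suc (Suc m)) * ?term m S"
      by simp
  qed
  show ?thesis
    unfolding matching_sum_def[of f g "Suc (Suc m)"] nonconsecutive_subsets_Suc_Suc
    using finite_nonconsecutive_subsets disjoint without_top with_top
    by (subst sum.union_disjoint) auto
qed

lemma continuant_eq_matching_sum: "continuant f g (Suc m) = matching_sum f g m"
proof (induction m rule: induct_nat_012)
  case 0
  have "nonconsecutive_subsets 0 = {{}}" unfolding nonconsecutive_subsets_def by auto
  then show ?case by (simp add: matching_sum_def)
next
  case 1
  have "nonconsecutive_subsets (Suc 0) = {{}, {1}}" unfolding nonconsecutive_subsets_def by auto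
  moreover have "{1..Suc (Suc 0)} = {1, 2}" "{Suc 0..Suc (Suc 0)} - {Suc (Suc 0), Suc 0} = {}" by auto
  ultimately show ?case by (simp add: matching_sum_def numeral_2_eq_2)
next
  case (ge2 m)
  then show ?case by (simp add: matching_sum_Suc_Suc)
qed

lemma reflect_nonconsecutive_subset:
  assumes S: "S \<in> nonconsecutive_subsets m"
  shows "(\<lambda>i. Suc m - i) ` S \<in> nonconsecutive_subsets m"
proof -
  have range: "1 \<le> i \<and> i \<le> m" if "i \<in> S" for i
    using S that unfolding nonconsecutive_subsets_def by auto
  have "Suc (Suc m - i) \<noteq> Suc m - j" if "i \<in> S" "j \<in> S" for i j
  proof
    assume "Suc (Suc m - i) = Suc m - j"
    then have "i = Suc j" using range[OF that(1)] range[OF that(2)] by arith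
    then show False using S that unfolding nonconsecutive_subsets_def by auto
  qed
  moreover have "1 \<le> Suc m - i \<and> Suc m - i \<le> m" if "i \<in> S" for i
    using range[OF that] by auto
  ultimately show ?thesis
    unfolding nonconsecutive_subsets_def by auto
qed

lemma reflect_image_involutive:
  assumes "S \<subseteq> {..Suc m}"
  shows "(\<lambda>i. Suc m - i) ` (\<lambda>i. Suc m - i) ` S = S"
proof -
  have "(\<lambda>i. Suc m - (Suc m - i)) ` S = id ` S"
    using assms by (intro image_cong) auto
  then show ?thesis by (simp add: image_image)
qed

lemma matching_complement_reflect:
  assumes "S \<subseteq> {1..m}"
  shows "{1..Suc m} - ((\<lambda>i. Suc m - i) ` S \<union> Suc ` (\<lambda>i. Suc m - i) ` S)
       = (\<lambda>j. Suc (Suc m) - j) ` ({1..Suc m} - (S \<union> Suc ` S))"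
  (is "?lhs = ?s ` ?C")
proof -
  have inj: "inj_on ?s {1..Suc m}"
    by (rule inj_onI) (simp; arith)
  have onto: "?s ` {1..Suc m} = {1..Suc m}"
  proof
    show "{1..Suc m} \<subseteq> ?s ` {1..Suc m}"
    proof
      fix x assume "x \<in> {1..Suc m}"
      then have "x = ?s (?s x)" "?s x \<in> {1..Suc m}" by auto
      then show "x \<in> ?s ` {1..Suc m}" by blast
    qed
  qed auto
  have "?s ` S = Suc ` (\<lambda>i. Suc m - i) ` S"
    unfolding image_image using assms by (intro image_cong) (auto simp: Suc_diff_le)
  then have "?s ` (S \<union> Suc ` S) = (\<lambda>i. Suc m - i) ` S \<union> Suc ` (\<lambda>i. Suc m - i) ` S"
    by (simp add: image_Un image_image Un_commute)
  moreover have "S \<union> Suc ` S \<subseteq> {1..Suc m}" using assms by auto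
  ultimately show ?thesis
    using inj_on_image_set_diff[OF inj _ \<open>S \<union> Suc ` S \<subseteq> {1..Suc m}\<close>] onto by simp
qed

lemma matching_term_reflect:
  assumes "S \<in> nonconsecutive_subsets m"
  shows "(-1) ^ card ((\<lambda>i. Suc m - i) ` S) * (\<Prod>i\<in>(\<lambda>i. Suc m - i) ` S. g (Suc m - i))
      * (\<Prod>j\<in>{1..Suc m} - ((\<lambda>i. Suc m - i) ` S \<union> Suc ` (\<lambda>i. Suc m - i) ` S). f (Suc (Suc m) - j))
    = (-1) ^ card S * (\<Prod>i\<in>S. g i) * (\<Prod>j\<in>{1..Suc m} - (S \<union> Suc ` S). f j)"
proof -
  have sub: "S \<subseteq> {1..m}"
    using assms unfolding nonconsecutive_subsets_def by blast
  have inj: "inj_on (\<lambda>i. Suc m - i) S"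
    using sub by (intro inj_onI) (auto simp: subset_iff)
  have inj': "inj_on (\<lambda>j. Suc (Suc m) - j) ({1..Suc m} - (S \<union> Suc ` S))"
    by (intro inj_onI) (simp; arith)
  have "card ((\<lambda>i. Suc m - i) ` S) = card S"
    using inj by (rule card_image)
  moreover have "(\<Prod>i\<in>(\<lambda>i. Suc m - i) ` S. g (Suc m - i)) = (\<Prod>i\<in>S. g i)"
    using sub unfolding prod.reindex[OF inj] by (intro prod.cong) auto
  moreover have "(\<Prod>j\<in>{1..Suc m} - ((\<lambda>i. Suc m - i) ` S \<union> Suc ` (\<lambda>i. Suc m - i) ` S).
        f (Suc (Suc m) - j)) = (\<Prod>j\<in>{1..Suc m} - (S \<union> Suc ` S). f j)"
    unfolding matching_complement_reflect[OF sub] prod.reindex[OF inj'] by (intro prod.cong) auto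
  ultimately show ?thesis by simp
qed

lemma matching_sum_reflect:
  "matching_sum f g m = matching_sum (\<lambda>j. f (Suc (Suc m) - j)) (\<lambda>i. g (Suc m - i)) m"
proof -
  have involutive: "(\<lambda>i. Suc m - i) ` (\<lambda>i. Suc m - i) ` S = S" if "S \<in> nonconsecutive_subsets m" for S
    using that unfolding nonconsecutive_subsets_def by (intro reflect_image_involutive) auto
  show ?thesis
    unfolding matching_sum_def
    by (rule sum.reindex_bij_witness[where i = "image (\<lambda>i. Suc m - i)" and j = "image (\<lambda>i. Suc m - i)"])
      (simp_all only: involutive reflect_nonconsecutive_subset matching_term_reflect)
qed

lemma continuant_reflect:
  "continuant f g (Suc m) = continuant (\<lambda>j. f (Suc (Suc m) - j)) (\<lambda>i. g (Suc m - i)) (Suc m)"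
  unfolding continuant_eq_matching_sum by (rule matching_sum_reflect)

definition three_term_residual ::
  "(nat \<Rightarrow> 'a::comm_ring_1) \<Rightarrow> (nat \<Rightarrow> 'a) \<Rightarrow> (nat \<Rightarrow> 'a) \<Rightarrow> (nat \<Rightarrow> 'a) \<Rightarrow> nat \<Rightarrow> 'a" where
  "three_term_residual a b c d n = d n * a n - d (n - 1) * b n + (if 2 \<le> n then d (n - 2) else 0) * c n"

lemma prod_mult_eq_continuant:
  assumes "d 0 = 1" and "\<And>k. k \<in> {1..n} \<Longrightarrow> three_term_residual a b c d k = 0"
  shows "(\<Prod>k=1..n. a k) * d n = continuant b (\<lambda>i. a i * c (Suc i)) n"
  using assms(2)
proof (induction n rule: induct_nat_012)
  case 0
  then show ?case using assms(1) by simp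
next
  case 1
  then show ?case using assms(1) by (auto simp: three_term_residual_def mult.commute)
next
  case (ge2 n)
  have recurrence: "d (Suc (Suc n)) * a (Suc (Suc n)) = d (Suc n) * b (Suc (Suc n)) - d n * c (Suc (Suc n))"
    using ge2.prems[of "Suc (Suc n)"] by (simp add: three_term_residual_def algebra_simps)
  have "(\<Prod>k=1..Suc (Suc n). a k) * d (Suc (Suc n))
      = (\<Prod>k=1..Suc n. a k) * (d (Suc (Suc n)) * a (Suc (Suc n)))"
    by (simp add: ac_simps)
  also have "\<dots> = b (Suc (Suc n)) * ((\<Prod>k=1..Suc n. a k) * d (Suc n))
        - a (Suc n) * c (Suc (Suc n)) * ((\<Prod>k=1..n. a k) * d n)"
    unfolding recurrence by (simp add: algebra_simps)
  also have "\<dots> = continuant b (\<lambda>i. a i * c (Suc i)) (Suc (Suc n))"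
    using ge2 by simp
  finally show ?case .
qed

lemma prod_mult_three_term_residual:
  assumes "d 0 = 1" and "\<And>k. k \<in> {1..n} \<Longrightarrow> three_term_residual a b c d k = 0"
  shows "(\<Prod>k=1..n. a k) * three_term_residual a b c d (Suc n)
       = (\<Prod>k=1..Suc n. a k) * d (Suc n) - continuant b (\<lambda>i. a i * c (Suc i)) (Suc n)"
proof (cases n)
  case 0
  then show ?thesis using assms(1) by (simp add: three_term_residual_def algebra_simps)
next
  case (Suc m)
  let ?K = "continuant b (\<lambda>i. a i * c (Suc i))"
  have solution_Suc_m: "(\<Prod>k=1..Suc m. a k) * d (Suc m) = ?K (Suc m)"
    using assms Suc by (intro prod_mult_eq_continuant) auto
  have solution_m: "(\<Prod>k=1..m. a k) * d m = ?K m"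
    using assms Suc by (intro prod_mult_eq_continuant) auto
  have "(\<Prod>k=1..Suc m. a k) * three_term_residual a b c d (Suc (Suc m))
      = (\<Prod>k=1..Suc (Suc m). a k) * d (Suc (Suc m))
        - (b (Suc (Suc m)) * ((\<Prod>k=1..Suc m. a k) * d (Suc m))
           - a (Suc m) * c (Suc (Suc m)) * ((\<Prod>k=1..m. a k) * d m))"
    by (simp add: three_term_residual_def algebra_simps)
  also have "\<dots> = (\<Prod>k=1..Suc (Suc m). a k) * d (Suc (Suc m)) - ?K (Suc (Suc m))"
    unfolding solution_Suc_m solution_m by simp
  finally show ?thesis using Suc by simp
qed

fun three_term_solution :: "(nat \<Rightarrow> 'a::field) \<Rightarrow> (nat \<Rightarrow> 'a) \<Rightarrow> (nat \<Rightarrow> 'a) \<Rightarrow> nat \<Rightarrow> 'a" where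
  "three_term_solution a b c 0 = 1"
| "three_term_solution a b c (Suc 0) = b 1 / a 1"
| "three_term_solution a b c (Suc (Suc n)) =
     (three_term_solution a b c (Suc n) * b (Suc (Suc n)) - three_term_solution a b c n * c (Suc (Suc n)))
     / a (Suc (Suc n))"

lemma three_term_residual_solution:
  assumes "1 \<le> k" and "a k \<noteq> 0"
  shows "three_term_residual a b c (three_term_solution a b c) k = 0"
proof -
  obtain j where "k = Suc j" using assms(1) by (cases k) auto
  then show ?thesis using assms(2) by (cases j) (auto simp: three_term_residual_def)
qed

lemma three_term_solvable_iff_continuant_eq_0:
  fixes a b c :: "nat \<Rightarrow> 'a::field"
  assumes lead_nonzero: "\<And>n. n \<in> {1..N} \<Longrightarrow> a n \<noteq> 0" and lead_vanishes: "a (Suc N) = 0"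
  shows "(\<exists>d. d 0 = 1 \<and> (\<forall>n\<in>{1..Suc N}. three_term_residual a b c d n = 0))
     \<longleftrightarrow> continuant b (\<lambda>i. a i * c (Suc i)) (Suc N) = 0"
proof
  assume "\<exists>d. d 0 = 1 \<and> (\<forall>n\<in>{1..Suc N}. three_term_residual a b c d n = 0)"
  then obtain d where "d 0 = 1" "\<And>n. n \<in> {1..Suc N} \<Longrightarrow> three_term_residual a b c d n = 0"
    by blast
  then have "(\<Prod>k=1..Suc N. a k) * d (Suc N) = continuant b (\<lambda>i. a i * c (Suc i)) (Suc N)"
    by (rule prod_mult_eq_continuant)
  then show "continuant b (\<lambda>i. a i * c (Suc i)) (Suc N) = 0"
    using lead_vanishes by simp
next
  assume continuant_zero: "continuant b (\<lambda>i. a i * c (Suc i)) (Suc N) = 0"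
  let ?d = "three_term_solution a b c"
  have residuals_up_to_N: "three_term_residual a b c ?d k = 0" if "k \<in> {1..N}" for k
    using that lead_nonzero by (auto intro: three_term_residual_solution)
  have "(\<Prod>k=1..N. a k) * three_term_residual a b c ?d (Suc N) = 0"
    using prod_mult_three_term_residual[of ?d N a b c] residuals_up_to_N continuant_zero lead_vanishes by simp
  moreover have "(\<Prod>k=1..N. a k) \<noteq> 0"
    using lead_nonzero by simp
  ultimately have "three_term_residual a b c ?d (Suc N) = 0" by simp
  then show "\<exists>d. d 0 = 1 \<and> (\<forall>n\<in>{1..Suc N}. three_term_residual a b c d n = 0)"
    using residuals_up_to_N by (intro exI[of _ ?d]) (auto simp: le_Suc_eq)
qed

lemma qp_mult: "qp L x * qp L y = qp L (x + y)"
  unfolding qp_def by (simp add: exp_add distrib_right)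

lemma qp_nonzero: "qp L x \<noteq> 0"
  unfolding qp_def by simp

lemma qp_of_int_neq_1:
  assumes "Re L < 0" and "k \<noteq> 0"
  shows "qp L (of_int k) \<noteq> 1"
proof
  assume "qp L (of_int k) = 1"
  then have "exp (of_int k * Re L) = 1"
    using norm_exp_eq_Re[of "of_int k * L"] unfolding qp_def by simp
  then show False using assms by simp
qed

locale q_heun_recurrence =
  fixes L t1 t2 h1 h2 l1 l2 a1 a2 b E :: complex and N :: nat
  assumes b_eq: "b = of_nat N + 1"
begin

abbreviation lam :: complex where
  "lam \<equiv> lambda1 h1 h2 l1 l2 a1 a2 b"

definition lead :: "nat \<Rightarrow> complex" where
  "lead n = t1 * t2 * qp L (1 - of_nat n + h1 + h2 - lam)
     * (1 - qp L (of_nat n)) * (1 - qp L (of_nat n - b))"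

definition middle :: "nat \<Rightarrow> complex" where
  "middle n = E + qp L (3/2 - of_nat n - lam) * (qp L h1 * t1 + qp L h2 * t2)
     + qp L (of_nat n - 3/2 + lam + a1 + a2) * (qp L l1 * t1 + qp L l2 * t2)"

definition trail :: "nat \<Rightarrow> complex" where
  "trail n = qp L (2 - of_nat n - lam)
     * (1 - qp L (of_nat n - 2 + lam + a1)) * (1 - qp L (of_nat n - 2 + lam + a2))"

lemma apparent_iff_residuals_vanish:
  "apparent L t1 t2 h1 h2 l1 l2 a1 a2 b E N
     \<longleftrightarrow> (\<exists>d. d 0 = 1 \<and> (\<forall>n\<in>{1..Suc N}. three_term_residual lead middle trail d n = 0))"
  unfolding apparent_def heun_rel_def three_term_residual_def lead_def middle_def trail_def Let_def
  by (simp add: mult.assoc)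

lemma lead_nonzero:
  assumes "Re L < 0" and "t1 \<noteq> 0" and "t2 \<noteq> 0" and "n \<in> {1..N}"
  shows "lead n \<noteq> 0"
proof -
  have "qp L (of_nat n) \<noteq> 1"
    using qp_of_int_neq_1[OF assms(1), of "int n"] assms(4) by simp
  moreover have "qp L (of_nat n - b) \<noteq> 1"
    using qp_of_int_neq_1[OF assms(1), of "int n - int N - 1"] b_eq assms(4)
    by (simp add: diff_diff_eq)
  ultimately have "1 - qp L (of_nat n) \<noteq> 0" "1 - qp L (of_nat n - b) \<noteq> 0"
    by simp_all
  then show ?thesis
    unfolding lead_def using assms(2,3) qp_nonzero by simp
qed

lemma lead_Suc_N: "lead (Suc N) = 0"
  using b_eq unfolding lead_def by (simp add: qp_def)

lemma cy_reflect:
  assumes "j \<in> {1..Suc N}"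
  shows "E + cy L t1 t2 h1 h2 l1 l2 a1 a2 b N (Suc (Suc N) - j) = middle j"
proof -
  have "of_nat N - of_nat (Suc (Suc N) - j) + 1/2 + lam + a1 + a2 = of_nat j - 3/2 + lam + a1 + a2"
       "of_nat (Suc (Suc N) - j) - of_nat N - 1/2 - lam = 3/2 - of_nat j - lam"
    using assms by (simp_all add: of_nat_diff field_simps)
  then show ?thesis
    unfolding cy_def middle_def Let_def by (simp only: ac_simps)
qed

lemma cx_cz_reflect:
  assumes "i \<in> {1..N}"
  shows "cx L t1 t2 h1 h2 l1 l2 a1 a2 b N (Suc N - i) * cz L h1 h2 l1 l2 a1 a2 b N (Suc (Suc N - i))
       = lead i * trail (Suc i)"
proof -
  define k where "k = (of_nat i :: complex)"
  have cx_eq: "cx L t1 t2 h1 h2 l1 l2 a1 a2 b N (Suc N - i)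
      = t1 * t2 * qp L (2 - k + h1 + h2 - a1 - 2 * lam) * (1 - qp L (k - b)) * (1 - qp L (k - 1 + lam + a1))"
  proof -
    have "of_nat (Suc N - i) = of_nat N + 1 - k"
      using assms by (simp add: k_def of_nat_diff)
    moreover have "of_nat N + 1 - k - of_nat N + 1 + h1 + h2 - a1 - 2 * lam = 2 - k + h1 + h2 - a1 - 2 * lam"
      "- (of_nat N + 1 - k) = k - b" "of_nat N - (of_nat N + 1 - k) + lam + a1 = k - 1 + lam + a1"
      using b_eq by simp_all
    ultimately show ?thesis
      unfolding cx_def Let_def by (simp only:)
  qed
  have cz_eq: "cz L h1 h2 l1 l2 a1 a2 b N (Suc (Suc N - i))
      = qp L (a1 - k) * (1 - qp L (k - 1 + lam + a2)) * (1 - qp L k)"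
  proof -
    have "of_nat (Suc (Suc N - i)) = of_nat N + 2 - k"
      using assms by (simp add: k_def of_nat_diff)
    moreover have "of_nat N + 2 - k - of_nat N - 2 + a1 = a1 - k"
      "of_nat N - (of_nat N + 2 - k) + 1 + lam + a2 = k - 1 + lam + a2"
      "of_nat N - (of_nat N + 2 - k) + 2 = k"
      by simp_all
    ultimately show ?thesis
      unfolding cz_def Let_def by (simp only:)
  qed
  have trail_eq: "trail (Suc i)
      = qp L (1 - k - lam) * (1 - qp L (k - 1 + lam + a1)) * (1 - qp L (k - 1 + lam + a2))"
    unfolding trail_def k_def by (simp add: algebra_simps)
  have exponents: "qp L (2 - k + h1 + h2 - a1 - 2 * lam) * qp L (a1 - k)
      = qp L (1 - k + h1 + h2 - lam) * qp L (1 - k - lam)"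
    unfolding qp_mult by (simp add: algebra_simps)
  have "cx L t1 t2 h1 h2 l1 l2 a1 a2 b N (Suc N - i) * cz L h1 h2 l1 l2 a1 a2 b N (Suc (Suc N - i))
      = t1 * t2 * (qp L (2 - k + h1 + h2 - a1 - 2 * lam) * qp L (a1 - k))
        * ((1 - qp L k) * (1 - qp L (k - b)) * (1 - qp L (k - 1 + lam + a1)) * (1 - qp L (k - 1 + lam + a2)))"
    unfolding cx_eq cz_eq by (simp only: ac_simps)
  also have "\<dots> = lead i * trail (Suc i)"
    unfolding exponents trail_eq lead_def k_def[symmetric] by (simp only: ac_simps)
  finally show ?thesis .
qed

lemma cpoly_eq_continuant:
  "cpoly L t1 t2 h1 h2 l1 l2 a1 a2 b N E = continuant middle (\<lambda>i. lead i * trail (Suc i)) (Suc N)"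
proof -
  have "cpoly L t1 t2 h1 h2 l1 l2 a1 a2 b N E
      = continuant (\<lambda>j. E + cy L t1 t2 h1 h2 l1 l2 a1 a2 b N j)
          (\<lambda>i. cx L t1 t2 h1 h2 l1 l2 a1 a2 b N i * cz L h1 h2 l1 l2 a1 a2 b N (Suc i)) (Suc N)"
    unfolding continuant_eq_matching_sum matching_sum_def nonconsecutive_subsets_def cpoly_def by simp
  also have "\<dots> = continuant (\<lambda>j. E + cy L t1 t2 h1 h2 l1 l2 a1 a2 b N (Suc (Suc N) - j))
      (\<lambda>i. cx L t1 t2 h1 h2 l1 l2 a1 a2 b N (Suc N - i) * cz L h1 h2 l1 l2 a1 a2 b N (Suc (Suc N - i))) (Suc N)"
    by (rule continuant_reflect)
  also have "\<dots> = continuant middle (\<lambda>i. lead i * trail (Suc i)) (Suc N)"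
    by (rule continuant_cong) (auto simp: cy_reflect cx_cz_reflect)
  finally show ?thesis .
qed

end

theorem proposition3p8:
  fixes q L t1 t2 h1 h2 l1 l2 a1 a2 b E :: complex and N :: nat
  assumes "0 < cmod q" and "cmod q < 1" and "exp L = q"
    and "t1 \<noteq> 0" and "t2 \<noteq> 0"
    and "b = of_nat N + 1"
  shows "apparent L t1 t2 h1 h2 l1 l2 a1 a2 b E N \<longleftrightarrow>
         cpoly L t1 t2 h1 h2 l1 l2 a1 a2 b N E = 0"
proof -
  interpret q_heun_recurrence L t1 t2 h1 h2 l1 l2 a1 a2 b E N
    using assms(6) by unfold_locales
  have "Re L < 0"
    using assms(2,3) by auto
  then have "lead n \<noteq> 0" if "n \<in> {1..N}" for n
    using assms(4,5) that by (rule lead_nonzero)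
  then show ?thesis
    unfolding apparent_iff_residuals_vanish cpoly_eq_continuant
    using lead_Suc_N by (rule three_term_solvable_iff_continuant_eq_0)
qed

end
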